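(* For trees $(n,s,L)$ and $(n,s',L')$, we have $(n,s,L)\sim(n,s',L')$ if and only if there exists a permutation $\sigma$ of $\{1,\dots,n\}$ such that $\sigma(L)=L'$ and $s'(\sigma(i))=\sigma(s(i))$ for all $i\in\{1,\dots,n-1\}$.
   Context: For $n\ge1$ write $\underline n=\{1,\dots,n\}$. A tree $(n,s,L)$ consists of $L\subseteq\underline n$ and a map $s:\underline{n-1}\to\underline n\setminus L$ with $s(x)>x$ for all $x$, and ($x\le y<s(x)\Rightarrow s(y)\le s(x)$). If $n\notin L$ and $\{k_1<\dots<k_m\}=s^{-1}(n)$, $k_0=0$, $n_i=k_i-k_{i-1}$, the successor trees of $(n,s,L)$ are the trees $(n_i,s_i,L_i)$, $i=1,\dots,m$, with $s_i(j)=s(j+k_{i-1})-k_{i-1}$ and $L_i=\{x-k_{i-1}\mid x\in L\}\cap\underline{n_i}$. For a permutation $\tau$ of $\underline m$, $(n,s^\tau,L^\tau)$ denotes the unique tree (with non-leaf root $n$) whose sequence of successor trees is $(n_{\tau(1)},s_{\tau(1)},L_{\tau(1)}),\dots,(n_{\tau(m)},s_{\tau(m)},L_{\tau(m)})$. The relation $\sim$ is the smallest equivalence relation on trees such that (i) $(n,s,L)\sim(n,s^\tau,L^\tau)$ for every applicable permutation $\tau$, and (ii) if $(n,s,L)$ and $(n',s',L')$ have successor tree sequences $(n_1,s_1,L_1),\dots,(n_m,s_m,L_m)$ and $(n_1,s'_1,L'_1),\dots,(n_m,s'_m,L'_m)$ with $(n_i,s_i,L_i)\sim(n_i,s'_i,L'_i)$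 for all $i$, then $(n,s,L)\sim(n',s',L')$. *)

theory Defs
  imports "HOL-Combinatorics.Permutations"
begin

text \<open>A tree (n,s,L) is represented as a triple. The map s is only meaningful on
  {1..n-1}; we normalise it to be 0 outside this domain so that trees are canonical
  HOL values.\<close>

type_synonym tree = "nat \<times> (nat \<Rightarrow> nat) \<times> nat set"

definition is_tree :: "tree \<Rightarrow> bool" where
  "is_tree t = (case t of (n, s, L) \<Rightarrow>
     1 \<le> n \<and> L \<subseteq> {1..n} \<and>
     (\<forall>x\<in>{1..<n}. s x \<in> {1..n} - L \<and> x < s x) \<and>
     (\<forall>x y. x \<in> {1..<n} \<longrightarrow> x \<le> y \<longrightarrow> y < s x \<longrightarrow> s y \<le> s x) \<and>
     (\<forall>x. x \<notin> {1..<n} \<longrightarrow> s x = 0))"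

text \<open>Successor trees (meaningful when n is not in L): with k_1<...<k_m the preimage
  of n under s and k_0 = 0, the i-th successor tree (0-based index i) is
  (n_i, s_i, L_i).\<close>

definition succ_trees :: "tree \<Rightarrow> tree list" where
  "succ_trees t = (case t of (n, s, L) \<Rightarrow>
     (let ks = sorted_list_of_set {x \<in> {1..<n}. s x = n};
          ks0 = 0 # ks
      in map (\<lambda>i. let k = ks0 ! i; ni = ks ! i - ks0 ! i
                  in (ni,
                      (\<lambda>j. if 1 \<le> j \<and> j < ni then s (j + k) - k else 0),
                      {x - k | x. x \<in> L} \<inter> {1..ni}))
             [0..<length ks]))"

definition nonleaf_root :: "tree \<Rightarrow> bool" where
  "nonleaf_root t = (case t of (n, s, L) \<Rightarrow> n \<notin> L)"

inductive tree_equiv :: "tree \<Rightarrow> tree \<Rightarrow> bool" where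
  refl: "is_tree t \<Longrightarrow> tree_equiv t t"
| sym: "tree_equiv t t' \<Longrightarrow> tree_equiv t' t"
| trans: "tree_equiv t t' \<Longrightarrow> tree_equiv t' t'' \<Longrightarrow> tree_equiv t t''"
| perm: "is_tree (n, s, L) \<Longrightarrow> is_tree (n, s', L') \<Longrightarrow> n \<notin> L \<Longrightarrow> n \<notin> L' \<Longrightarrow>
         \<tau> permutes {..<length (succ_trees (n, s, L))} \<Longrightarrow>
         succ_trees (n, s', L') =
           map (\<lambda>i. succ_trees (n, s, L) ! \<tau> i) [0..<length (succ_trees (n, s, L))] \<Longrightarrow>
         tree_equiv (n, s, L) (n, s', L')"
| cong: "is_tree (n, s, L) \<Longrightarrow> is_tree (n', s', L') \<Longrightarrow> n \<notin> L \<Longrightarrow> n' \<notin> L' \<Longrightarrow>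
         list_all2 (\<lambda>a b. fst a = fst b \<and> tree_equiv a b)
           (succ_trees (n, s, L)) (succ_trees (n', s', L')) \<Longrightarrow>
         tree_equiv (n, s, L) (n', s', L')"

end

theory Submission
  imports Defs
begin

text \<open>
  A tree with non-leaf root is its successor trees laid side by side under a new root; call it
  their join. Both \<open>\<sim>\<close> and isomorphism of labelled trees (a relabelling \<open>\<sigma>\<close> of the nodes
  respecting \<open>s\<close> and \<open>L\<close>) are compatible with this decomposition.

  If \<open>t \<sim> t'\<close>, an isomorphism is built by induction on \<open>\<sim>\<close>: both generating steps keep
  the successor trees up to reordering and isomorphism, and isomorphisms between the blocks of
  two joins glue to one between the joins.

  Conversely, an isomorphism preserves the shape of a tree, i.e.\ the unordered rooted tree
  with marked leaves it represents, and trees of equal shape are \<open>\<sim>\<close>-equivalent by induction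
  on their size: a step (i) reorders the successor trees of one of them so that they match those
  of the other shape by shape, and a step (ii) then replaces them by the equivalent ones.
\<close>

abbreviation tree_size :: "tree \<Rightarrow> nat" where "tree_size t \<equiv> fst t"
abbreviation tree_parent :: "tree \<Rightarrow> nat \<Rightarrow> nat" where "tree_parent t \<equiv> fst (snd t)"
abbreviation tree_leaves :: "tree \<Rightarrow> nat set" where "tree_leaves t \<equiv> snd (snd t)"

lemma is_treeD:
  assumes "is_tree t"
  shows "1 \<le> tree_size t" "tree_leaves t \<subseteq> {1..tree_size t}"
    and "x \<in> {1..<tree_size t} \<Longrightarrow> tree_parent t x \<in> {1..tree_size t} - tree_leaves t"
    and "x \<in> {1..<tree_size t} \<Longrightarrow> x < tree_parent t x"
    and "x \<in> {1..<tree_size t} \<Longrightarrow> x \<le> y \<Longrightarrow> y < tree_parent t x \<Longrightarrow>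
           tree_parent t y \<le> tree_parent t x"
    and "x \<notin> {1..<tree_size t} \<Longrightarrow> tree_parent t x = 0"
  using assms by (cases t; auto simp: is_tree_def)+

lemma leaf_tree_eq:
  assumes "is_tree (n, s, L)" and "n \<in> L"
  shows "(n, s, L) = (1, \<lambda>_. 0, {1})"
proof -
  note T = is_treeD[OF assms(1), simplified]
  have "n = 1"
  proof (rule ccontr)
    assume "n \<noteq> 1"
    then have "n - 1 \<in> {1..<n}" using T(1) by auto
    then have "s (n - 1) = n" "s (n - 1) \<notin> L" using T(3,4)[of "n - 1"] by auto
    then show False using \<open>n \<in> L\<close> by simp
  qed
  then show ?thesis using T(2,6) \<open>n \<in> L\<close> by fastforce
qed

text \<open>The bound \<open>c < v\<close> makes the recursion of \<open>shape_at\<close> below terminate; for trees it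
  holds anyway (\<open>children_tree\<close>).\<close>

definition children :: "tree \<Rightarrow> nat \<Rightarrow> nat set" where
  "children t v = {c. c < v \<and> tree_parent t c = v}"

lemma finite_children [simp]: "finite (children t v)"
  unfolding children_def by simp

lemma children_tree:
  assumes "is_tree t" and "1 \<le> v"
  shows "children t v = {c \<in> {1..<tree_size t}. tree_parent t c = v}"
proof (intro set_eqI iffI)
  fix c assume "c \<in> children t v"
  then have c: "c < v" "tree_parent t c = v" by (auto simp: children_def)
  moreover have "c \<in> {1..<tree_size t}"
  proof (rule ccontr)
    assume "c \<notin> {1..<tree_size t}"
    then show False using is_treeD(6)[OF assms(1)] c(2) assms(2) by simp
  qed
  ultimately show "c \<in> {c \<in> {1..<tree_size t}. tree_parent t c = v}" by simp
next
  fix c assume "c \<in> {c \<in> {1..<tree_size t}. tree_parent t c = v}"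
  then show "c \<in> children t v" using is_treeD(4)[OF assms(1)] by (auto simp: children_def)
qed

section \<open>Joins of trees\<close>

definition offset :: "tree list \<Rightarrow> nat \<Rightarrow> nat" where
  "offset ts i = (\<Sum>j<i. tree_size (ts ! j))"

lemma offset_0 [simp]: "offset ts 0 = 0"
  by (simp add: offset_def)

lemma offset_Suc: "offset ts (Suc i) = offset ts i + tree_size (ts ! i)"
  by (simp add: offset_def)

lemma offset_mono: "i \<le> j \<Longrightarrow> offset ts i \<le> offset ts j"
  unfolding offset_def by (rule sum_mono2) auto

lemma offset_length: "offset ts (length ts) = sum_list (map tree_size ts)"
  by (simp add: offset_def sum_list_sum_nth atLeast0LessThan)

lemma offset_add_le: "i < m \<Longrightarrow> y \<le> tree_size (ts ! i) \<Longrightarrow> offset ts i + y \<le> offset ts m"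
  using offset_mono[of "Suc i" m ts] by (simp add: offset_Suc)

lemma offset_add_inject:
  assumes "y \<in> {1..tree_size (ts ! i)}" "y' \<in> {1..tree_size (ts ! j)}"
    and "offset ts i + y = offset ts j + y'"
  shows "i = j \<and> y = y'"
proof -
  have "\<not> i < j" if "y \<in> {1..tree_size (ts ! i)}" "y' \<in> {1..tree_size (ts ! j)}"
    "offset ts i + y = offset ts j + y'" for i j y y'
    using that offset_add_le[of i j y ts] by auto
  then have "i = j" using assms by (metis linorder_neqE_nat)
  then show ?thesis using assms by simp
qed

lemma offset_add_cases:
  assumes "x \<in> {1..offset ts m}"
  obtains i y where "i < m" "y \<in> {1..tree_size (ts ! i)}" "x = offset ts i + y"
  using assms
proof (induction m)
  case (Suc m)
  show ?case
  proof (cases "x \<le> offset ts m")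
    case True
    then show ?thesis using Suc by (meson atLeastAtMost_iff less_SucI)
  next
    case False
    then show ?thesis using Suc.prems
      by (intro Suc.prems(1)[of m "x - offset ts m"]) (auto simp: offset_Suc)
  qed
qed simp

lemma offset_Least:
  assumes "y \<in> {1..tree_size (ts ! i)}"
  shows "(LEAST j. offset ts i + y \<le> offset ts (Suc j)) = i"
proof (rule Least_equality)
  show "offset ts i + y \<le> offset ts (Suc i)" using assms by (simp add: offset_Suc)
next
  fix j assume "offset ts i + y \<le> offset ts (Suc j)"
  show "i \<le> j"
  proof (rule ccontr)
    assume "\<not> i \<le> j"
    then have "offset ts (Suc j) \<le> offset ts i" by (intro offset_mono) simp
    then show False using \<open>offset ts i + y \<le> offset ts (Suc j)\<close> assms by simp
  qed
qed

text \<open>In a join the trees \<open>ts\<close> are laid side by side below a new root, \<open>ts ! i\<close> occupying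
  the nodes \<open>offset ts i + 1, \<dots>, offset ts (Suc i)\<close>.\<close>

definition is_join :: "tree \<Rightarrow> tree list \<Rightarrow> bool" where
  "is_join t ts \<longleftrightarrow>
     tree_size t = offset ts (length ts) + 1 \<and>
     tree_leaves t \<subseteq> {1..offset ts (length ts)} \<and>
     (\<forall>x. x \<notin> {1..<tree_size t} \<longrightarrow> tree_parent t x = 0) \<and>
     (\<forall>i<length ts. \<forall>y\<in>{1..tree_size (ts ! i)}.
        tree_parent t (offset ts i + y) =
          (if y = tree_size (ts ! i) then tree_size t else offset ts i + tree_parent (ts ! i) y) \<and>
        (offset ts i + y \<in> tree_leaves t \<longleftrightarrow> y \<in> tree_leaves (ts ! i)))"

lemma is_joinD:
  assumes "is_join t ts"
  shows "tree_size t = offset ts (length ts) + 1"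
    and "tree_leaves t \<subseteq> {1..offset ts (length ts)}"
    and "x \<notin> {1..<tree_size t} \<Longrightarrow> tree_parent t x = 0"
    and "i < length ts \<Longrightarrow> y \<in> {1..tree_size (ts ! i)} \<Longrightarrow>
           tree_parent t (offset ts i + y) =
             (if y = tree_size (ts ! i) then tree_size t else offset ts i + tree_parent (ts ! i) y)"
    and "i < length ts \<Longrightarrow> y \<in> {1..tree_size (ts ! i)} \<Longrightarrow>
           offset ts i + y \<in> tree_leaves t \<longleftrightarrow> y \<in> tree_leaves (ts ! i)"
  using assms unfolding is_join_def by blast+

text \<open>The nodes \<open>k + 1, \<dots>, c\<close> of \<open>t\<close>, renumbered from 1; \<open>succ_trees\<close> cuts a tree
  at the children of its root into such segments.\<close>

definition segment :: "tree \<Rightarrow> nat \<Rightarrow> nat \<Rightarrow> tree" where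
  "segment t k c = (c - k,
     \<lambda>j. if 1 \<le> j \<and> j < c - k then tree_parent t (j + k) - k else 0,
     {x - k | x. x \<in> tree_leaves t} \<inter> {1..c - k})"

definition root_children :: "tree \<Rightarrow> nat list" where
  "root_children t = sorted_list_of_set (children t (tree_size t))"

lemma set_root_children:
  assumes "is_tree (n, s, L)"
  shows "set (root_children (n, s, L)) = {c \<in> {1..<n}. s c = n}"
  using children_tree[OF assms] is_treeD(1)[OF assms] by (simp add: root_children_def)

lemma root_children_nth:
  assumes "is_tree (n, s, L)" and "i < length (root_children (n, s, L))"
  shows "root_children (n, s, L) ! i \<in> {1..<n}" "s (root_children (n, s, L) ! i) = n"
  using nth_mem[OF assms(2)] set_root_children[OF assms(1)] by auto

lemma root_children_less:
  "i < j \<Longrightarrow> j < length (root_children t) \<Longrightarrow> root_children t ! i < root_children t ! j"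
  using sorted_wrt_nth_less[of "(<)" "root_children t"] by (simp add: root_children_def)

lemma succ_trees_eq_segments:
  assumes "is_tree (n, s, L)"
  defines "ks \<equiv> root_children (n, s, L)"
  shows "succ_trees (n, s, L) = map (\<lambda>i. segment (n, s, L) ((0 # ks) ! i) (ks ! i)) [0..<length ks]"
proof -
  have "{x \<in> {1..<n}. s x = n} = children (n, s, L) n"
    using children_tree[OF assms(1)] is_treeD(1)[OF assms(1)] by simp
  then show ?thesis
    by (simp only: ks_def root_children_def succ_trees_def segment_def Let_def prod.case
        fst_conv snd_conv)
qed

lemma root_children_gap:
  assumes "is_tree (n, s, L)" and "i < length (root_children (n, s, L))"
  shows "(0 # root_children (n, s, L)) ! i < root_children (n, s, L) ! i"
proof (cases i)
  case 0
  then show ?thesis using root_children_nth(1)[OF assms] by simp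
next
  case (Suc j)
  then show ?thesis using root_children_less[of j i] assms(2) by simp
qed

lemma parent_le_root_child:
  assumes T: "is_tree (n, s, L)" and x: "x \<in> {1..<n}" "x < c"
    and c: "c \<in> children (n, s, L) n" and "s x \<noteq> n"
  shows "s x \<le> c"
proof (rule ccontr)
  assume "\<not> s x \<le> c"
  then have "s c \<le> s x" using is_treeD(5)[OF T, of x c] x by simp
  moreover have "s c = n" using c by (simp add: children_def)
  ultimately show False using is_treeD(3)[OF T, of x] x \<open>s x \<noteq> n\<close> by simp
qed

lemma is_tree_segment:
  assumes T: "is_tree (n, s, L)" and kc: "k < c" "c < n"
    and closed: "\<And>x. k < x \<Longrightarrow> x < c \<Longrightarrow> s x \<le> c"
  shows "is_tree (segment (n, s, L) k c)"
proof -
  note TD = is_treeD[OF T, unfolded fst_conv snd_conv]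
  have range: "j + k \<in> {1..<n}" if "j \<in> {1..<c - k}" for j using that kc by auto
  have inside: "j + k < s (j + k)" "s (j + k) \<le> c" "s (j + k) \<notin> L" if "j \<in> {1..<c - k}" for j
    using TD(3,4)[OF range[OF that]] closed[of "j + k"] that by auto
  show ?thesis
    unfolding segment_def is_tree_def
  proof (simp only: prod.case fst_conv snd_conv, intro conjI ballI allI impI)
    show "1 \<le> c - k" using kc by simp
    show "{x - k |x. x \<in> L} \<inter> {1..c - k} \<subseteq> {1..c - k}" by blast
  next
    fix j assume j: "j \<in> {1..<c - k}"
    note j' = inside[OF j]
    show "j < (if 1 \<le> j \<and> j < c - k then s (j + k) - k else 0)" using j j' by auto
    have "s (j + k) - k \<notin> {x - k |x. x \<in> L} \<inter> {1..c - k}"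
    proof
      assume "s (j + k) - k \<in> {x - k |x. x \<in> L} \<inter> {1..c - k}"
      then obtain x where "x \<in> L" "s (j + k) - k = x - k" "1 \<le> x - k" by auto
      moreover from this have "x = s (j + k)" using j' by linarith
      ultimately show False using j' by simp
    qed
    then show "(if 1 \<le> j \<and> j < c - k then s (j + k) - k else 0)
        \<in> {1..c - k} - {x - k |x. x \<in> L} \<inter> {1..c - k}"
      using j j' by auto
  next
    fix x y assume x: "x \<in> {1..<c - k}" and xy: "x \<le> y"
      and ys: "y < (if 1 \<le> x \<and> x < c - k then s (x + k) - k else 0)"
    have y: "y \<in> {1..<c - k}" using x xy ys inside(2)[OF x] by auto
    have "s (y + k) \<le> s (x + k)" using TD(5)[OF range[OF x], of "y + k"] xy ys x by auto
    then show "(if 1 \<le> y \<and> y < c - k then s (y + k) - k else 0)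
        \<le> (if 1 \<le> x \<and> x < c - k then s (x + k) - k else 0)"
      using x y by auto
  qed auto
qed

lemma parent_between_root_children:
  assumes T: "is_tree (n, s, L)" and i: "i < length (root_children (n, s, L))"
    and x: "(0 # root_children (n, s, L)) ! i < x" "x < root_children (n, s, L) ! i"
  shows "s x \<le> root_children (n, s, L) ! i"
proof -
  let ?ks = "root_children (n, s, L)"
  have x_range: "x \<in> {1..<n}" using x root_children_nth(1)[OF T i] by auto
  have "s x \<noteq> n"
  proof
    assume "s x = n"
    then have "x \<in> set ?ks" using x_range set_root_children[OF T] by simp
    then obtain j where j: "j < length ?ks" "x = ?ks ! j" by (auto simp: in_set_conv_nth)
    show False
    proof (cases "j < i")
      case True
      then obtain i' where i': "i = Suc i'" "j \<le> i'" by (cases i) auto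
      then have "?ks ! j \<le> ?ks ! i'" using root_children_less[of j i' "(n, s, L)"] i by (cases "j = i'") auto
      then show False using x j i' by simp
    next
      case False
      then have "?ks ! i \<le> ?ks ! j" using root_children_less[of i j "(n, s, L)"] j by (cases "i = j") auto
      then show False using x j by simp
    qed
  qed
  moreover have "?ks ! i \<in> children (n, s, L) n" using nth_mem[OF i] by (simp add: root_children_def)
  ultimately show ?thesis using parent_le_root_child[OF T x_range x(2)] by simp
qed

lemma last_root_child:
  assumes T: "is_tree (n, s, L)"
  shows "(0 # root_children (n, s, L)) ! length (root_children (n, s, L)) = n - 1"
proof (cases "n = 1")
  case True
  then have "root_children (n, s, L) = []" using set_root_children[OF T] by auto
  then show ?thesis using True by simp
next
  case False
  let ?ks = "root_children (n, s, L)"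
  note TD = is_treeD[OF T, unfolded fst_conv snd_conv]
  have pred: "n - 1 \<in> {1..<n}" using TD(1) False by auto
  then have "s (n - 1) = n" using TD(3,4)[OF pred] by auto
  then have "n - 1 \<in> set ?ks" using pred set_root_children[OF T] by simp
  then obtain j where j: "j < length ?ks" "n - 1 = ?ks ! j" by (auto simp: in_set_conv_nth)
  then obtain l where l: "length ?ks = Suc l" by (cases "length ?ks") auto
  have "?ks ! j \<le> ?ks ! l" using root_children_less[of j l "(n, s, L)"] j l by (cases "j = l") auto
  moreover have "?ks ! l < n" using root_children_nth(1)[OF T, of l] l by simp
  ultimately show ?thesis using j l by simp
qed

lemma succ_trees_is_tree:
  assumes T: "is_tree (n, s, L)"
  shows "\<forall>u\<in>set (succ_trees (n, s, L)). is_tree u"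
  using root_children_gap[OF T] root_children_nth(1)[OF T] parent_between_root_children[OF T]
  by (auto simp: succ_trees_eq_segments[OF T] intro!: is_tree_segment[OF T])

lemma offset_succ_trees:
  assumes T: "is_tree (n, s, L)" and "i \<le> length (root_children (n, s, L))"
  shows "offset (succ_trees (n, s, L)) i = (0 # root_children (n, s, L)) ! i"
  using assms(2)
proof (induction i)
  case (Suc i)
  then show ?case
    using root_children_gap[OF T, of i] by (simp add: offset_Suc succ_trees_eq_segments[OF T] segment_def)
qed simp

lemma is_join_succ_trees:
  assumes T: "is_tree (n, s, L)" and "n \<notin> L"
  shows "is_join (n, s, L) (succ_trees (n, s, L))"
proof -
  note TD = is_treeD[OF T, unfolded fst_conv snd_conv]
  define ks where "ks = root_children (n, s, L)"
  define k where "k i = (0 # ks) ! i" for i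
  define ts where "ts = succ_trees (n, s, L)"
  have length_ts: "length ts = length ks"
    by (simp add: ts_def succ_trees_eq_segments[OF T] ks_def)
  have ts_nth: "ts ! i = segment (n, s, L) (k i) (ks ! i)" if "i < length ks" for i
    using that by (simp add: ts_def succ_trees_eq_segments[OF T] ks_def k_def)
  have offset_ts: "offset ts i = k i" if "i \<le> length ks" for i
    using offset_succ_trees[OF T] that by (simp add: ts_def ks_def k_def)
  have total: "offset ts (length ts) = n - 1"
    using last_root_child[OF T] offset_ts[of "length ks"] length_ts by (simp add: ks_def k_def)
  show ?thesis
    unfolding is_join_def ts_def[symmetric]
  proof (intro conjI allI impI ballI)
    show "tree_size (n, s, L) = offset ts (length ts) + 1" using total TD(1) by simp
    have "x \<in> {1..n - 1}" if "x \<in> L" for x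
    proof -
      have "x \<in> {1..n}" "x \<noteq> n" using that TD(2) \<open>n \<notin> L\<close> by blast+
      then show ?thesis by auto
    qed
    then show "tree_leaves (n, s, L) \<subseteq> {1..offset ts (length ts)}" using total by auto
    show "tree_parent (n, s, L) x = 0" if "x \<notin> {1..<tree_size (n, s, L)}" for x
      using TD(6) that by simp
  next
    fix i y assume i: "i < length ts" and y: "y \<in> {1..tree_size (ts ! i)}"
    then have i': "i < length ks" using length_ts by simp
    have k_less: "k i < ks ! i" using root_children_gap[OF T] i' by (simp add: ks_def k_def)
    have root_child: "ks ! i < n" "s (ks ! i) = n" using root_children_nth[OF T] i' by (auto simp: ks_def)
    have y': "1 \<le> y" "y \<le> ks ! i - k i" using y ts_nth[OF i'] by (auto simp: segment_def)
    show "tree_parent (n, s, L) (offset ts i + y) =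
      (if y = tree_size (ts ! i) then tree_size (n, s, L) else offset ts i + tree_parent (ts ! i) y)"
    proof (cases "y = ks ! i - k i")
      case True
      then show ?thesis
        using k_less root_child offset_ts[of i] i' by (simp add: ts_nth segment_def)
    next
      case False
      have "s (k i + y) \<le> ks ! i"
        using parent_between_root_children[OF T, of i "k i + y"] i' y' False k_less
        by (simp add: ks_def k_def)
      moreover have "k i + y < n" using k_less root_child y' False by linarith
      then have "k i + y < s (k i + y)" using TD(4)[of "k i + y"] y' by simp
      ultimately show ?thesis
        using False y' offset_ts[of i] i' by (simp add: ts_nth segment_def add.commute)
    qed
    show "offset ts i + y \<in> tree_leaves (n, s, L) \<longleftrightarrow> y \<in> tree_leaves (ts ! i)"
      using y' offset_ts[of i] i' by (force simp: ts_nth segment_def)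
  qed
qed

lemma is_join_node_cases:
  assumes "is_join t ts" and "x \<in> {1..<tree_size t}"
  obtains i y where "i < length ts" "y \<in> {1..tree_size (ts ! i)}" "x = offset ts i + y"
proof -
  have "x \<in> {1..offset ts (length ts)}" using assms is_joinD(1)[OF assms(1)] by auto
  then show ?thesis using offset_add_cases that by blast
qed

lemma size_lt_is_join:
  assumes "is_join t ts" and "u \<in> set ts"
  shows "tree_size u < tree_size t"
proof -
  obtain j where "j < length ts" "u = ts ! j" using assms(2) by (auto simp: in_set_conv_nth)
  then show ?thesis
    using offset_add_le[of j "length ts" "tree_size u" ts] is_joinD(1)[OF assms(1)] by simp
qed

lemma is_join_parent_inner:
  assumes "is_join t ts" and "i < length ts" and "y \<in> {1..<tree_size (ts ! i)}"
  shows "tree_parent t (offset ts i + y) = offset ts i + tree_parent (ts ! i) y"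
  using is_joinD(4)[OF assms(1,2), of y] assms(3) by auto

lemma is_join_parent:
  assumes J: "is_join t ts" and trees: "\<forall>u\<in>set ts. is_tree u" and x: "x \<in> {1..<tree_size t}"
  shows "tree_parent t x \<in> {1..tree_size t} - tree_leaves t" "x < tree_parent t x"
proof -
  note JD = is_joinD[OF J]
  obtain i y where iy: "i < length ts" "y \<in> {1..tree_size (ts ! i)}" "x = offset ts i + y"
    by (rule is_join_node_cases[OF J x])
  have "tree_parent t x \<in> {1..tree_size t} - tree_leaves t \<and> x < tree_parent t x"
  proof (cases "y = tree_size (ts ! i)")
    case True
    then show ?thesis using JD(1,2) JD(4)[OF iy(1,2)] iy(3) x by auto
  next
    case False
    then have y: "y \<in> {1..<tree_size (ts ! i)}" using iy(2) by auto
    note TD = is_treeD(3,4)[OF trees[rule_format, OF nth_mem[OF iy(1)]] y]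
    have "offset ts i + tree_parent (ts ! i) y \<le> offset ts (length ts)"
      using offset_add_le[OF iy(1)] TD(1) by auto
    moreover have "offset ts i + tree_parent (ts ! i) y \<notin> tree_leaves t"
      using JD(5)[OF iy(1), of "tree_parent (ts ! i) y"] TD(1) by auto
    ultimately show ?thesis
      using is_join_parent_inner[OF J iy(1) y] TD iy(3) JD(1) by auto
  qed
  then show "tree_parent t x \<in> {1..tree_size t} - tree_leaves t" "x < tree_parent t x" by auto
qed

lemma is_join_parent_mono:
  assumes J: "is_join t ts" and trees: "\<forall>u\<in>set ts. is_tree u"
    and x: "x \<in> {1..<tree_size t}" and z: "x \<le> z" "z < tree_parent t x"
  shows "tree_parent t z \<le> tree_parent t x"
proof -
  obtain i y where iy: "i < length ts" "y \<in> {1..tree_size (ts ! i)}" "x = offset ts i + y"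
    by (rule is_join_node_cases[OF J x])
  show ?thesis
  proof (cases "y = tree_size (ts ! i)")
    case True
    then have "tree_parent t x = tree_size t" using is_joinD(4)[OF J iy(1,2)] iy(3) by simp
    moreover from this have "z \<in> {1..<tree_size t}" using x z by auto
    ultimately show ?thesis using is_join_parent(1)[OF J trees] by fastforce
  next
    case False
    then have y: "y \<in> {1..<tree_size (ts ! i)}" using iy(2) by auto
    note TD = is_treeD[OF trees[rule_format, OF nth_mem[OF iy(1)]]]
    note inner = is_join_parent_inner[OF J iy(1)]
    define w where "w = z - offset ts i"
    have w: "z = offset ts i + w" "y \<le> w" "w < tree_parent (ts ! i) y"
      using z iy(3) inner[OF y] by (auto simp: w_def)
    then have "w \<in> {1..<tree_size (ts ! i)}" using y TD(3)[OF y] by auto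
    then have "tree_parent t z = offset ts i + tree_parent (ts ! i) w" using inner w(1) by simp
    moreover have "tree_parent (ts ! i) w \<le> tree_parent (ts ! i) y" using TD(5)[OF y w(2,3)] .
    ultimately show ?thesis using inner[OF y] iy(3) by simp
  qed
qed

lemma is_tree_if_is_join:
  assumes J: "is_join t ts" and trees: "\<forall>u\<in>set ts. is_tree u"
  shows "is_tree t"
proof -
  obtain n s L where t: "t = (n, s, L)" by (cases t)
  note JD = is_joinD[OF J, unfolded t fst_conv snd_conv]
  note parent = is_join_parent[OF J trees, unfolded t fst_conv snd_conv]
  note mono = is_join_parent_mono[OF J trees, unfolded t fst_conv snd_conv]
  show ?thesis
    unfolding t is_tree_def
  proof (simp only: prod.case, intro conjI ballI allI impI)
    show "1 \<le> n" "L \<subseteq> {1..n}" using JD(1,2) by auto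
  qed (use parent mono JD(3) in auto)
qed

lemma children_is_join:
  assumes J: "is_join t ts" and trees: "\<forall>u\<in>set ts. is_tree u"
    and i: "i < length ts" and y: "y \<in> {1..tree_size (ts ! i)}"
  shows "children t (offset ts i + y) = (\<lambda>c. offset ts i + c) ` children (ts ! i) y"
proof
  note JD = is_joinD[OF J]
  note TD = is_treeD[OF trees[rule_format, OF nth_mem]]
  show "children t (offset ts i + y) \<subseteq> (\<lambda>c. offset ts i + c) ` children (ts ! i) y"
  proof
    fix c assume "c \<in> children t (offset ts i + y)"
    then have c: "c < offset ts i + y" "tree_parent t c = offset ts i + y"
      by (auto simp: children_def)
    have "c \<in> {1..<tree_size t}" using JD(3)[of c] c(2) y by fastforce
    then obtain j w where jw: "j < length ts" "w \<in> {1..tree_size (ts ! j)}" "c = offset ts j + w"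
      using is_join_node_cases[OF J] by blast
    have below_root: "offset ts i + y < tree_size t"
      using offset_add_le[OF i, of y ts] y JD(1) by auto
    then have "w \<noteq> tree_size (ts ! j)" using JD(4)[OF jw(1,2)] jw(3) c(2) by auto
    then have w: "w \<in> {1..<tree_size (ts ! j)}" using jw(2) by auto
    then have "tree_parent (ts ! j) w \<in> {1..tree_size (ts ! j)}" using TD(3)[OF jw(1)] by auto
    moreover have "offset ts j + tree_parent (ts ! j) w = offset ts i + y"
      using JD(4)[OF jw(1,2)] w jw(3) c(2) by auto
    ultimately have "j = i" "tree_parent (ts ! j) w = y" using offset_add_inject y by blast+
    then show "c \<in> (\<lambda>c. offset ts i + c) ` children (ts ! i) y"
      using jw(3) c(1) by (auto simp: children_def)
  qed
next
  note JD = is_joinD[OF J]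
  note TD = is_treeD[OF trees[rule_format, OF nth_mem[OF i]]]
  show "(\<lambda>c. offset ts i + c) ` children (ts ! i) y \<subseteq> children t (offset ts i + y)"
  proof
    fix z assume "z \<in> (\<lambda>c. offset ts i + c) ` children (ts ! i) y"
    then obtain c where c: "c < y" "tree_parent (ts ! i) c = y" "z = offset ts i + c"
      by (auto simp: children_def)
    then have "c \<in> {1..<tree_size (ts ! i)}" using TD(6)[of c] y by fastforce
    then show "z \<in> children t (offset ts i + y)" using JD(4)[OF i, of c] c by (auto simp: children_def)
  qed
qed

lemma children_root_is_join:
  assumes J: "is_join t ts" and trees: "\<forall>u\<in>set ts. is_tree u"
  shows "children t (tree_size t) = (\<lambda>i. offset ts (Suc i)) ` {..<length ts}"
proof
  note JD = is_joinD[OF J]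
  note TD = is_treeD[OF trees[rule_format, OF nth_mem]]
  show "children t (tree_size t) \<subseteq> (\<lambda>i. offset ts (Suc i)) ` {..<length ts}"
  proof
    fix c assume "c \<in> children t (tree_size t)"
    then have c: "c < tree_size t" "tree_parent t c = tree_size t" by (auto simp: children_def)
    have "c \<in> {1..<tree_size t}" using JD(3)[of c] c by fastforce
    then obtain j w where jw: "j < length ts" "w \<in> {1..tree_size (ts ! j)}" "c = offset ts j + w"
      using is_join_node_cases[OF J] by blast
    have "w = tree_size (ts ! j)"
    proof (rule ccontr)
      assume "w \<noteq> tree_size (ts ! j)"
      then have w: "w \<in> {1..<tree_size (ts ! j)}" using jw(2) by auto
      have "offset ts j + tree_parent (ts ! j) w \<le> offset ts (length ts)"
        using offset_add_le[OF jw(1)] TD(3)[OF jw(1) w] by auto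
      then show False using JD(1) JD(4)[OF jw(1,2)] w jw(3) c(2) by auto
    qed
    then show "c \<in> (\<lambda>i. offset ts (Suc i)) ` {..<length ts}" using jw by (auto simp: offset_Suc)
  qed
  show "(\<lambda>i. offset ts (Suc i)) ` {..<length ts} \<subseteq> children t (tree_size t)"
  proof
    fix c assume "c \<in> (\<lambda>i. offset ts (Suc i)) ` {..<length ts}"
    then obtain j where j: "j < length ts" "c = offset ts j + tree_size (ts ! j)"
      by (auto simp: offset_Suc)
    then show "c \<in> children t (tree_size t)"
      using JD(1) JD(4)[OF j(1), of "tree_size (ts ! j)"] TD(1)[OF j(1)] offset_add_le[OF j(1), of "tree_size (ts ! j)" ts]
      by (auto simp: children_def)
  qed
qed

lemma segment_is_join:
  assumes J: "is_join t ts" and trees: "\<forall>u\<in>set ts. is_tree u" and i: "i < length ts"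
  shows "segment t (offset ts i) (offset ts (Suc i)) = ts ! i"
proof -
  note JD = is_joinD[OF J]
  note TD = is_treeD[OF trees[rule_format, OF nth_mem[OF i]]]
  obtain a b c where abc: "ts ! i = (a, b, c)" by (cases "ts ! i")
  have "(\<lambda>j. if 1 \<le> j \<and> j < a then tree_parent t (j + offset ts i) - offset ts i else 0) = b"
  proof
    fix j show "(if 1 \<le> j \<and> j < a then tree_parent t (j + offset ts i) - offset ts i else 0) = b j"
      using JD(4)[OF i, of j] TD(6)[of j] abc by (auto simp: add.commute)
  qed
  moreover have "{x - offset ts i | x. x \<in> tree_leaves t} \<inter> {1..a} = c"
  proof (intro subset_antisym subsetI)
    fix y assume "y \<in> {x - offset ts i | x. x \<in> tree_leaves t} \<inter> {1..a}"
    then obtain x where x: "x \<in> tree_leaves t" "y = x - offset ts i" "y \<in> {1..a}" by blast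
    then have "x = offset ts i + y" by auto
    then show "y \<in> c" using JD(5)[OF i, of y] x abc by simp
  next
    fix y assume "y \<in> c"
    then have "y \<in> {1..a}" "offset ts i + y \<in> tree_leaves t" using JD(5)[OF i, of y] TD(2) abc by auto
    then show "y \<in> {x - offset ts i | x. x \<in> tree_leaves t} \<inter> {1..a}" by force
  qed
  ultimately show ?thesis using abc by (simp add: segment_def offset_Suc)
qed

lemma succ_trees_eq_if_is_join:
  assumes J: "is_join (n, s, L) ts" and trees: "\<forall>u\<in>set ts. is_tree u"
  shows "succ_trees (n, s, L) = ts"
proof -
  have T: "is_tree (n, s, L)" using is_tree_if_is_join[OF J trees] .
  define ks where "ks = map (\<lambda>i. offset ts (Suc i)) [0..<length ts]"
  have "offset ts (Suc i) < offset ts (Suc j)" if "i < j" "j < length ts" for i j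
    using offset_mono[of "Suc i" j ts] is_treeD(1)[OF trees[rule_format, OF nth_mem[OF that(2)]]] that
    by (simp add: offset_Suc)
  then have "sorted_wrt (<) ks"
    unfolding sorted_wrt_iff_nth_less ks_def by simp
  then have ks: "root_children (n, s, L) = ks"
    unfolding root_children_def using children_root_is_join[OF J trees]
    by (intro strict_sorted_equal) (auto simp: ks_def)
  have "(0 # ks) ! i = offset ts i" if "i < length ts" for i
    using that by (cases i) (auto simp: ks_def)
  then show ?thesis
    using segment_is_join[OF J trees]
    by (intro nth_equalityI) (auto simp: succ_trees_eq_segments[OF T] ks ks_def)
qed

definition join :: "tree list \<Rightarrow> tree" where
  "join ts = (offset ts (length ts) + 1,
     \<lambda>x. if x \<in> {1..offset ts (length ts)} then
           (let i = LEAST i. x \<le> offset ts (Suc i)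
            in if x = offset ts (Suc i) then offset ts (length ts) + 1
               else offset ts i + tree_parent (ts ! i) (x - offset ts i))
         else 0,
     \<Union>i<length ts. (\<lambda>y. offset ts i + y) ` tree_leaves (ts ! i))"

lemma is_join_join:
  assumes trees: "\<forall>u\<in>set ts. is_tree u"
  shows "is_join (join ts) ts"
  unfolding is_join_def
proof (intro conjI allI impI ballI)
  note TD = is_treeD[OF trees[rule_format, OF nth_mem]]
  show "tree_size (join ts) = offset ts (length ts) + 1" by (simp add: join_def)
  show "tree_leaves (join ts) \<subseteq> {1..offset ts (length ts)}"
    using TD(2) offset_add_le by (fastforce simp: join_def)
  show "tree_parent (join ts) x = 0" if "x \<notin> {1..<tree_size (join ts)}" for x
    using that by (auto simp: join_def)
next
  note TD = is_treeD[OF trees[rule_format, OF nth_mem]]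
  fix i y assume i: "i < length ts" and y: "y \<in> {1..tree_size (ts ! i)}"
  have range: "offset ts i + y \<in> {1..offset ts (length ts)}" using offset_add_le[OF i, of y] y by auto
  show "tree_parent (join ts) (offset ts i + y) =
    (if y = tree_size (ts ! i) then tree_size (join ts) else offset ts i + tree_parent (ts ! i) y)"
    using range offset_Least[OF y] y by (auto simp: join_def Let_def offset_Suc)
  show "offset ts i + y \<in> tree_leaves (join ts) \<longleftrightarrow> y \<in> tree_leaves (ts ! i)"
  proof
    assume "offset ts i + y \<in> tree_leaves (join ts)"
    then obtain j y' where j: "j < length ts" "y' \<in> tree_leaves (ts ! j)" "offset ts i + y = offset ts j + y'"
      by (auto simp: join_def)
    then have "i = j \<and> y = y'" using offset_add_inject[OF y] TD(2)[OF j(1)] by blast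
    then show "y \<in> tree_leaves (ts ! i)" using j by simp
  qed (use i in \<open>auto simp: join_def\<close>)
qed

section \<open>Isomorphisms of trees\<close>

definition tree_iso :: "(nat \<Rightarrow> nat) \<Rightarrow> tree \<Rightarrow> tree \<Rightarrow> bool" where
  "tree_iso \<sigma> t t' \<longleftrightarrow> tree_size t' = tree_size t \<and> \<sigma> permutes {1..tree_size t} \<and>
     \<sigma> ` tree_leaves t = tree_leaves t' \<and>
     (\<forall>i\<in>{1..<tree_size t}. tree_parent t' (\<sigma> i) = \<sigma> (tree_parent t i))"

lemma tree_isoD:
  assumes "tree_iso \<sigma> t t'"
  shows "tree_size t' = tree_size t" "\<sigma> permutes {1..tree_size t}"
    and "\<sigma> ` tree_leaves t = tree_leaves t'"
    and "i \<in> {1..<tree_size t} \<Longrightarrow> tree_parent t' (\<sigma> i) = \<sigma> (tree_parent t i)"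
  using assms by (auto simp: tree_iso_def)

lemma tree_iso_root:
  assumes T: "is_tree t" and T': "is_tree t'" and I: "tree_iso \<sigma> t t'"
  shows "\<sigma> (tree_size t) = tree_size t"
proof (rule ccontr)
  define n where "n = tree_size t"
  note P = tree_isoD(2)[OF I, folded n_def]
  assume "\<sigma> (tree_size t) \<noteq> tree_size t"
  moreover obtain i where i: "i \<in> {1..n}" "\<sigma> i = n"
    using is_treeD(1)[OF T] permutes_image[OF P] by (metis atLeastAtMost_iff imageE n_def order_refl)
  ultimately have "i \<noteq> n" by (auto simp: n_def)
  then have "i \<in> {1..<n}" using i(1) by auto
  then have "\<sigma> (tree_parent t i) = tree_parent t' n"
    using tree_isoD(4)[OF I \<open>i \<in> {1..<n}\<close>[unfolded n_def]] i(2) by (simp add: n_def)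
  also have "\<dots> = 0" using is_treeD(6)[OF T'] tree_isoD(1)[OF I] by (simp add: n_def)
  finally have "\<sigma> (tree_parent t i) = 0" .
  moreover have "\<sigma> (tree_parent t i) \<in> {1..n}"
    using permutes_in_image[OF P] is_treeD(3)[OF T \<open>i \<in> {1..<n}\<close>[unfolded n_def]]
    by (simp add: n_def)
  ultimately show False by simp
qed

lemma tree_iso_image_nonroot:
  assumes T: "is_tree t" and T': "is_tree t'" and I: "tree_iso \<sigma> t t'"
  shows "\<sigma> ` {1..<tree_size t} = {1..<tree_size t}"
proof -
  note P = tree_isoD(2)[OF I]
  have "{1..<tree_size t} = {1..tree_size t} - {tree_size t}" using is_treeD(1)[OF T] by auto
  then show ?thesis
    using tree_iso_root[OF assms] permutes_image[OF P] image_set_diff[OF permutes_inj[OF P]]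
    by simp
qed

lemma tree_iso_id: "tree_iso id t t"
  by (simp add: tree_iso_def permutes_id)

lemma tree_iso_inv:
  assumes T: "is_tree t" and T': "is_tree t'" and I: "tree_iso \<sigma> t t'"
  shows "tree_iso (inv \<sigma>) t' t"
proof -
  note P = tree_isoD(2)[OF I]
  have "tree_parent t (inv \<sigma> i') = inv \<sigma> (tree_parent t' i')" if i': "i' \<in> {1..<tree_size t}" for i'
  proof -
    obtain i where i: "i \<in> {1..<tree_size t}" "i' = \<sigma> i"
      using i' tree_iso_image_nonroot[OF assms] by blast
    then show ?thesis using I permutes_inverses(2)[OF P] by (simp add: tree_iso_def)
  qed
  moreover have "inv \<sigma> ` tree_leaves t' = tree_leaves t"
    using image_inv_f_f[OF permutes_inj[OF P], of "tree_leaves t"] tree_isoD(3)[OF I] by simp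
  ultimately show ?thesis using I permutes_inv[OF P] by (simp add: tree_iso_def)
qed

lemma tree_iso_comp:
  assumes T: "is_tree t" and T': "is_tree t'"
    and I: "tree_iso \<sigma> t t'" and I': "tree_iso \<sigma>' t' t''"
  shows "tree_iso (\<sigma>' \<circ> \<sigma>) t t''"
proof -
  have "tree_parent t'' (\<sigma>' (\<sigma> i)) = \<sigma>' (\<sigma> (tree_parent t i))" if i: "i \<in> {1..<tree_size t}" for i
  proof -
    have "\<sigma> i \<in> {1..<tree_size t'}" using i tree_iso_image_nonroot[OF assms(1-3)] I
      by (auto simp: tree_iso_def)
    then show ?thesis using I I' i by (simp add: tree_iso_def)
  qed
  moreover have "(\<sigma>' \<circ> \<sigma>) ` tree_leaves t = tree_leaves t''"
    using tree_isoD(3)[OF I] tree_isoD(3)[OF I'] by (metis image_comp)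
  ultimately show ?thesis
    using I I' permutes_compose[of \<sigma> "{1..tree_size t}" \<sigma>'] by (simp add: tree_iso_def)
qed

lemma tree_iso_children:
  assumes T: "is_tree t" and T': "is_tree t'" and I: "tree_iso \<sigma> t t'"
    and v: "v \<in> {1..tree_size t}"
  shows "children t' (\<sigma> v) = \<sigma> ` children t v"
proof -
  note P = tree_isoD(2)[OF I]
  have "\<sigma> v \<in> {1..tree_size t}" using permutes_in_image[OF P] v by blast
  then have "children t' (\<sigma> v) = {c' \<in> \<sigma> ` {1..<tree_size t}. tree_parent t' c' = \<sigma> v}"
    using children_tree[OF T'] tree_iso_image_nonroot[OF assms(1-3)] I by (simp add: tree_iso_def)
  also have "\<dots> = \<sigma> ` {c \<in> {1..<tree_size t}. \<sigma> (tree_parent t c) = \<sigma> v}"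
    using I by (auto simp: tree_iso_def)
  also have "\<dots> = \<sigma> ` children t v"
    using children_tree[OF T] v permutes_inj[OF P] by (simp add: inj_eq)
  finally show ?thesis .
qed

locale blockwise_iso =
  fixes t t' :: tree and ts ts' :: "tree list"
    and \<pi> :: "nat \<Rightarrow> nat" and \<sigma> :: "nat \<Rightarrow> nat \<Rightarrow> nat"
  assumes join: "is_join t ts" and join': "is_join t' ts'"
    and trees: "\<forall>u\<in>set ts. is_tree u" and trees': "\<forall>u\<in>set ts'. is_tree u"
    and length_eq: "length ts' = length ts"
    and perm: "\<pi> permutes {..<length ts}"
    and block_iso: "\<And>j. j < length ts \<Longrightarrow> tree_iso (\<sigma> j) (ts ! j) (ts' ! \<pi> j)"
begin

lemma block_is_tree: "j < length ts \<Longrightarrow> is_tree (ts ! j)" "j < length ts \<Longrightarrow> is_tree (ts' ! j)"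
  using trees trees' length_eq by auto

lemma perm_less: "j < length ts \<Longrightarrow> \<pi> j < length ts"
  using permutes_in_image[OF perm] by simp

lemma block_size: "j < length ts \<Longrightarrow> tree_size (ts' ! \<pi> j) = tree_size (ts ! j)"
  using block_iso by (simp add: tree_iso_def)

lemma block_image:
  assumes "j < length ts"
  shows "\<sigma> j ` {1..tree_size (ts ! j)} = {1..tree_size (ts ! j)}"
  using block_iso[OF assms] permutes_image[of "\<sigma> j"] unfolding tree_iso_def by blast

lemma block_perm_in:
  assumes "j < length ts" and "y \<in> {1..tree_size (ts ! j)}"
  shows "\<sigma> j y \<in> {1..tree_size (ts' ! \<pi> j)}"
  using assms block_image[OF assms(1)] block_size[OF assms(1)] by (metis image_eqI)

lemma total_offset: "offset ts' (length ts) = offset ts (length ts)"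
proof -
  have "offset ts' (length ts) = (\<Sum>j<length ts. tree_size (ts' ! \<pi> j))"
    using sum.permute[OF perm, of "\<lambda>i. tree_size (ts' ! i)"] by (simp add: offset_def)
  then show ?thesis using block_size by (simp add: offset_def)
qed

lemma size_eq: "tree_size t' = tree_size t"
  using is_joinD(1)[OF join] is_joinD(1)[OF join'] total_offset length_eq by simp

definition glue :: "nat \<Rightarrow> nat" where
  "glue x = (if x \<in> {1..offset ts (length ts)}
     then (let j = LEAST j. x \<le> offset ts (Suc j) in offset ts' (\<pi> j) + \<sigma> j (x - offset ts j))
     else x)"

lemma glue_block:
  assumes "j < length ts" and "y \<in> {1..tree_size (ts ! j)}"
  shows "glue (offset ts j + y) = offset ts' (\<pi> j) + \<sigma> j y"
  using offset_Least[OF assms(2)] offset_add_le[OF assms(1), of y ts] assms(2)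
  by (simp add: glue_def)

lemma glue_outside: "x \<notin> {1..offset ts (length ts)} \<Longrightarrow> glue x = x"
  unfolding glue_def by auto

lemma perm_surj:
  assumes "i < length ts"
  obtains j where "j < length ts" "\<pi> j = i"
proof -
  have "i \<in> \<pi> ` {..<length ts}" using assms permutes_image[OF perm] by simp
  then show ?thesis using that by blast
qed

lemma glue_image: "glue ` {1..offset ts (length ts)} = {1..offset ts (length ts)}"
proof (intro subset_antisym subsetI)
  fix z assume "z \<in> glue ` {1..offset ts (length ts)}"
  then obtain x where x: "x \<in> {1..offset ts (length ts)}" "z = glue x" by blast
  obtain j y where j: "j < length ts" "y \<in> {1..tree_size (ts ! j)}" "x = offset ts j + y"
    by (rule offset_add_cases[OF x(1)])
  have "\<sigma> j y \<in> {1..tree_size (ts' ! \<pi> j)}" using block_perm_in[OF j(1,2)] .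
  then show "z \<in> {1..offset ts (length ts)}"
    using glue_block[OF j(1,2)] x(2) j(3) offset_add_le[OF perm_less[OF j(1)], of "\<sigma> j y" ts']
      total_offset by auto
next
  fix z assume z: "z \<in> {1..offset ts (length ts)}"
  obtain i y' where i: "i < length ts" "y' \<in> {1..tree_size (ts' ! i)}" "z = offset ts' i + y'"
    by (rule offset_add_cases[OF z[folded total_offset]])
  obtain j where j: "j < length ts" "\<pi> j = i" by (rule perm_surj[OF i(1)])
  have "y' \<in> \<sigma> j ` {1..tree_size (ts ! j)}"
    using i(2) j block_image[OF j(1)] block_size[OF j(1)] by simp
  then obtain y where y: "y \<in> {1..tree_size (ts ! j)}" "\<sigma> j y = y'" by blast
  then have "offset ts j + y \<in> {1..offset ts (length ts)}"
    using offset_add_le[OF j(1), of y ts] by simp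
  moreover have "glue (offset ts j + y) = z" using glue_block[OF j(1) y(1)] y(2) j(2) i(3) by simp
  ultimately show "z \<in> glue ` {1..offset ts (length ts)}" by (metis image_eqI)
qed

lemma glue_permutes: "glue permutes {1..tree_size t}"
proof -
  have "bij_betw glue {1..offset ts (length ts)} {1..offset ts (length ts)}"
    using glue_image eq_card_imp_inj_on[of "{1..offset ts (length ts)}" glue] by (simp add: bij_betw_def)
  then have "glue permutes {1..offset ts (length ts)}"
    using glue_outside by (intro bij_imp_permutes) auto
  moreover have "{1..offset ts (length ts)} \<subseteq> {1..tree_size t}" using is_joinD(1)[OF join] by simp
  ultimately show ?thesis by (rule permutes_subset)
qed

lemma glue_leaves: "glue ` tree_leaves t = tree_leaves t'"
proof (intro subset_antisym subsetI)
  fix z assume "z \<in> glue ` tree_leaves t"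
  then obtain x where x: "x \<in> tree_leaves t" "z = glue x" by blast
  then have "x \<in> {1..offset ts (length ts)}" using is_joinD(2)[OF join] by blast
  then obtain j y where j: "j < length ts" "y \<in> {1..tree_size (ts ! j)}" "x = offset ts j + y"
    by (rule offset_add_cases)
  have "y \<in> tree_leaves (ts ! j)" using is_joinD(5)[OF join j(1,2)] x(1) j(3) by simp
  then have "\<sigma> j y \<in> tree_leaves (ts' ! \<pi> j)"
    unfolding tree_isoD(3)[OF block_iso[OF j(1)], symmetric] by simp
  moreover have "\<sigma> j y \<in> {1..tree_size (ts' ! \<pi> j)}" using block_perm_in[OF j(1,2)] .
  ultimately have "offset ts' (\<pi> j) + \<sigma> j y \<in> tree_leaves t'"
    using is_joinD(5)[OF join', of "\<pi> j" "\<sigma> j y"] perm_less[OF j(1)] length_eq by simp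
  then show "z \<in> tree_leaves t'" using glue_block[OF j(1,2)] x(2) j(3) by simp
next
  fix z assume z: "z \<in> tree_leaves t'"
  then have "z \<in> {1..offset ts' (length ts')}" using is_joinD(2)[OF join'] by blast
  then obtain i y' where i: "i < length ts" "y' \<in> {1..tree_size (ts' ! i)}" "z = offset ts' i + y'"
    unfolding length_eq by (rule offset_add_cases)
  obtain j where j: "j < length ts" "\<pi> j = i" by (rule perm_surj[OF i(1)])
  have "y' \<in> tree_leaves (ts' ! \<pi> j)"
    using is_joinD(5)[OF join', of i y'] i length_eq z j(2) by simp
  then obtain y where y: "y \<in> tree_leaves (ts ! j)" "\<sigma> j y = y'"
    unfolding tree_isoD(3)[OF block_iso[OF j(1)], symmetric] by blast
  have y_range: "y \<in> {1..tree_size (ts ! j)}" using is_treeD(2)[OF block_is_tree(1)[OF j(1)]] y(1) by blast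
  have "offset ts j + y \<in> tree_leaves t" using is_joinD(5)[OF join j(1) y_range] y(1) by simp
  moreover have "glue (offset ts j + y) = z" using glue_block[OF j(1) y_range] y(2) i(3) j(2) by simp
  ultimately show "z \<in> glue ` tree_leaves t" by (metis image_eqI)
qed

lemma glue_parent:
  assumes x: "x \<in> {1..<tree_size t}"
  shows "tree_parent t' (glue x) = glue (tree_parent t x)"
proof -
  obtain j y where j: "j < length ts" "y \<in> {1..tree_size (ts ! j)}" "x = offset ts j + y"
    using is_join_node_cases[OF join x] by blast
  note T = block_is_tree(1)[OF j(1)] block_is_tree(2)[OF perm_less[OF j(1)]]
  have y': "\<sigma> j y \<in> {1..tree_size (ts' ! \<pi> j)}" using block_perm_in[OF j(1,2)] .
  show ?thesis
  proof (cases "y = tree_size (ts ! j)")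
    case True
    then have "glue x = offset ts' (\<pi> j) + tree_size (ts' ! \<pi> j)"
      using glue_block[OF j(1,2)] j(3) tree_iso_root[OF T block_iso[OF j(1)]] block_size[OF j(1)] by simp
    then have "tree_parent t' (glue x) = tree_size t"
      using is_joinD(4)[OF join' _ y'] perm_less[OF j(1)] length_eq size_eq True block_size[OF j(1)]
        tree_iso_root[OF T block_iso[OF j(1)]] by simp
    moreover have "tree_parent t x = tree_size t" using is_joinD(4)[OF join j(1,2)] j(3) True by simp
    ultimately show ?thesis using glue_outside is_joinD(1)[OF join] by simp
  next
    case False
    then have y: "y \<in> {1..<tree_size (ts ! j)}" using j(2) by auto
    have p: "tree_parent (ts ! j) y \<in> {1..tree_size (ts ! j)}" using is_treeD(3)[OF T(1) y] by blast
    have "\<sigma> j y \<in> {1..<tree_size (ts ! j)}"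
      using y tree_iso_image_nonroot[OF T block_iso[OF j(1)]] by blast
    then have "tree_parent t' (glue x) = offset ts' (\<pi> j) + tree_parent (ts' ! \<pi> j) (\<sigma> j y)"
      using is_joinD(4)[OF join' _ y'] perm_less[OF j(1)] length_eq glue_block[OF j(1,2)] j(3)
        block_size[OF j(1)] by simp
    also have "\<dots> = offset ts' (\<pi> j) + \<sigma> j (tree_parent (ts ! j) y)"
      using block_iso[OF j(1)] y by (simp add: tree_iso_def)
    also have "\<dots> = glue (tree_parent t x)"
      using glue_block[OF j(1) p] is_joinD(4)[OF join j(1,2)] j(3) False by simp
    finally show ?thesis .
  qed
qed

lemma tree_iso_glue: "tree_iso glue t t'"
  using size_eq glue_permutes glue_leaves glue_parent by (simp add: tree_iso_def)

end

lemma tree_iso_if_blockwise_iso: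
  assumes "is_join t ts" "is_join t' ts'" "\<forall>u\<in>set ts. is_tree u" "\<forall>u\<in>set ts'. is_tree u"
    and "length ts' = length ts" "\<pi> permutes {..<length ts}"
    and "\<forall>j<length ts. \<exists>\<sigma>. tree_iso \<sigma> (ts ! j) (ts' ! \<pi> j)"
  shows "\<exists>\<phi>. tree_iso \<phi> t t'"
proof -
  obtain \<sigma> where "\<And>j. j < length ts \<Longrightarrow> tree_iso (\<sigma> j) (ts ! j) (ts' ! \<pi> j)"
    using assms(7) by metis
  then interpret blockwise_iso t t' ts ts' \<pi> \<sigma> using assms by unfold_locales
  show ?thesis using tree_iso_glue by blast
qed

lemma tree_equiv_imp_iso:
  "tree_equiv t t' \<Longrightarrow> is_tree t \<and> is_tree t' \<and> (\<exists>\<sigma>. tree_iso \<sigma> t t')"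
proof (induction rule: tree_equiv.induct)
  case (refl t)
  then show ?case using tree_iso_id by blast
next
  case (sym t t')
  then show ?case using tree_iso_inv by blast
next
  case (trans t t' t'')
  then show ?case using tree_iso_comp by blast
next
  case (perm n s L s' L' \<tau>)
  define ts where "ts = succ_trees (n, s, L)"
  define ts' where "ts' = succ_trees (n, s', L')"
  have \<tau>: "\<tau> permutes {..<length ts}" using perm(5) by (simp add: ts_def)
  have ts': "ts' = map (\<lambda>i. ts ! \<tau> i) [0..<length ts]" using perm(6) by (simp add: ts_def ts'_def)
  have "ts' ! inv \<tau> j = ts ! j" if "j < length ts" for j
    using that ts' permutes_inverses(1)[OF \<tau>] permutes_in_image[OF permutes_inv[OF \<tau>]] by simp
  then have "\<forall>j<length ts. \<exists>\<sigma>. tree_iso \<sigma> (ts ! j) (ts' ! inv \<tau> j)" using tree_iso_id by metis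
  moreover have "length ts' = length ts" using ts' by simp
  ultimately have "\<exists>\<sigma>. tree_iso \<sigma> (n, s, L) (n, s', L')"
    using tree_iso_if_blockwise_iso[OF is_join_succ_trees[OF perm(1,3), folded ts_def]
        is_join_succ_trees[OF perm(2,4), folded ts'_def] succ_trees_is_tree[OF perm(1), folded ts_def]
        succ_trees_is_tree[OF perm(2), folded ts'_def] _ permutes_inv[OF \<tau>]]
    by blast
  then show ?case using perm(1,2) by blast
next
  case (cong n s L n' s' L')
  define ts where "ts = succ_trees (n, s, L)"
  define ts' where "ts' = succ_trees (n', s', L')"
  have "list_all2 (\<lambda>a b. \<exists>\<sigma>. tree_iso \<sigma> a b) ts ts'"
    using cong(5) unfolding ts_def ts'_def by (rule list_all2_mono) blast
  then have "length ts' = length ts" "\<forall>j<length ts. \<exists>\<sigma>. tree_iso \<sigma> (ts ! j) (ts' ! id j)"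
    by (auto simp: list_all2_conv_all_nth)
  then have "\<exists>\<sigma>. tree_iso \<sigma> (n, s, L) (n', s', L')"
    using tree_iso_if_blockwise_iso[OF is_join_succ_trees[OF cong(1,3), folded ts_def]
        is_join_succ_trees[OF cong(2,4), folded ts'_def] succ_trees_is_tree[OF cong(1), folded ts_def]
        succ_trees_is_tree[OF cong(2), folded ts'_def] _ permutes_id]
    by blast
  then show ?case using cong(1,2) by blast
qed

section \<open>Shapes\<close>

text \<open>Unordered rooted trees with marked leaves; \<open>shape_at t v\<close> is the shape of the subtree
  of \<open>t\<close> rooted at \<open>v\<close>.\<close>

datatype shape = Shape (leaf_mark: bool) "shape multiset"

function shape_at :: "tree \<Rightarrow> nat \<Rightarrow> shape" where
  "shape_at t v = Shape (v \<in> tree_leaves t) (image_mset (shape_at t) (mset_set (children t v)))"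
  by auto
termination
  by (relation "measure (\<lambda>(t, v). v)") (auto simp: children_def)

declare shape_at.simps [simp del]

abbreviation tree_shape :: "tree \<Rightarrow> shape" where
  "tree_shape t \<equiv> shape_at t (tree_size t)"

lemma leaf_mark_shape_at: "leaf_mark (shape_at t v) \<longleftrightarrow> v \<in> tree_leaves t"
  by (subst shape_at.simps) simp

primrec node_count :: "shape \<Rightarrow> nat" where
  "node_count (Shape b M) = 1 + sum_mset (image_mset node_count M)"

lemma shape_at_join_block:
  assumes J: "is_join t ts" and trees: "\<forall>u\<in>set ts. is_tree u" and i: "i < length ts"
  shows "y \<in> {1..tree_size (ts ! i)} \<Longrightarrow> shape_at t (offset ts i + y) = shape_at (ts ! i) y"
proof (induction y rule: less_induct)
  case (less y)
  define C where "C = children (ts ! i) y"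
  have C: "C \<subseteq> {1..<tree_size (ts ! i)}" "\<forall>c\<in>C. c < y"
    using children_tree[OF trees[rule_format, OF nth_mem[OF i]]] less.prems
    by (auto simp: C_def children_def)
  have "mset_set (children t (offset ts i + y)) = image_mset (\<lambda>c. offset ts i + c) (mset_set C)"
    unfolding children_is_join[OF J trees i less.prems, folded C_def]
    by (rule image_mset_mset_set[symmetric]) (simp add: inj_on_def)
  moreover have "image_mset (\<lambda>c. shape_at t (offset ts i + c)) (mset_set C) =
      image_mset (shape_at (ts ! i)) (mset_set C)"
    using C less.IH by (intro image_mset_cong) (auto simp: C_def)
  moreover have "offset ts i + y \<in> tree_leaves t \<longleftrightarrow> y \<in> tree_leaves (ts ! i)"
    using is_joinD(5)[OF J i less.prems] .
  ultimately show ?case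
    by (subst (1 2) shape_at.simps) (simp add: C_def multiset.map_comp comp_def)
qed

lemma tree_shape_join:
  assumes J: "is_join t ts" and trees: "\<forall>u\<in>set ts. is_tree u"
  shows "tree_shape t = Shape False (mset (map tree_shape ts))"
proof -
  note TD = is_treeD(1)[OF trees[rule_format, OF nth_mem]]
  define f where "f i = offset ts (Suc i)" for i
  have "inj_on f {..<length ts}"
  proof (rule inj_onI)
    fix i j assume "i \<in> {..<length ts}" "j \<in> {..<length ts}" "f i = f j"
    then show "i = j"
      using offset_add_inject[of "tree_size (ts ! i)" ts i "tree_size (ts ! j)" j] TD
      by (simp add: f_def offset_Suc)
  qed
  then have children: "mset_set (children t (tree_size t)) = image_mset f (mset_set {..<length ts})"
    unfolding children_root_is_join[OF J trees, folded f_def] by (rule image_mset_mset_set[symmetric])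
  have "shape_at t (f i) = tree_shape (ts ! i)" if "i < length ts" for i
    using shape_at_join_block[OF J trees that, of "tree_size (ts ! i)"] TD[OF that]
    by (simp add: f_def offset_Suc)
  then have "image_mset (shape_at t \<circ> f) (mset_set {..<length ts}) =
      image_mset (\<lambda>i. tree_shape (ts ! i)) (mset_set {..<length ts})"
    by (intro image_mset_cong) simp
  also have "\<dots> = mset (map (\<lambda>i. tree_shape (ts ! i)) [0..<length ts])"
    by (simp add: mset_set_upto_eq_mset_upto)
  also have "map (\<lambda>i. tree_shape (ts ! i)) [0..<length ts] = map tree_shape ts"
    by (rule nth_equalityI) simp_all
  finally have "image_mset (shape_at t) (mset_set (children t (tree_size t))) = mset (map tree_shape ts)"
    unfolding children multiset.map_comp .
  moreover have "tree_size t \<notin> tree_leaves t" using is_joinD(1,2)[OF J] by auto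
  ultimately show ?thesis by (subst shape_at.simps) simp
qed

lemma node_count_tree_shape: "is_tree t \<Longrightarrow> node_count (tree_shape t) = tree_size t"
proof (induction "tree_size t" arbitrary: t rule: less_induct)
  case less
  obtain n s L where t: "t = (n, s, L)" by (cases t)
  show ?case
  proof (cases "n \<in> L")
    case True
    then have "t = (1, \<lambda>_. 0, {1})" using leaf_tree_eq[OF less.prems[unfolded t]] t by simp
    moreover have "children (1, \<lambda>_. 0, {1}) 1 = {}" by (simp add: children_def)
    ultimately show ?thesis by (subst shape_at.simps) simp
  next
    case False
    define ts where "ts = succ_trees (n, s, L)"
    have J: "is_join t ts" and trees: "\<forall>u\<in>set ts. is_tree u"
      using is_join_succ_trees succ_trees_is_tree less.prems False t by (simp_all add: ts_def)
    have IH: "node_count (tree_shape u) = tree_size u" if "u \<in> set ts" for u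
      using less.hyps size_lt_is_join[OF J that] trees that by simp
    have "node_count (tree_shape t) = 1 + (\<Sum>u\<in>#mset ts. node_count (tree_shape u))"
      using tree_shape_join[OF J trees] by (simp add: multiset.map_comp comp_def)
    also have "(\<Sum>u\<in>#mset ts. node_count (tree_shape u)) = (\<Sum>u\<in>#mset ts. tree_size u)"
      using IH by (intro arg_cong[where f = sum_mset] image_mset_cong) simp
    also have "\<dots> = sum_list (map tree_size ts)" by (metis mset_map sum_mset_sum_list)
    finally show ?thesis using is_joinD(1)[OF J] offset_length by simp
  qed
qed

lemma shape_at_iso:
  assumes T: "is_tree t" and T': "is_tree t'" and I: "tree_iso \<sigma> t t'"
  shows "v \<in> {1..tree_size t} \<Longrightarrow> shape_at t v = shape_at t' (\<sigma> v)"
proof (induction v rule: less_induct)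
  case (less v)
  note P = tree_isoD(2)[OF I]
  have C: "c < v" "c \<in> {1..tree_size t}" if "c \<in> children t v" for c
  proof -
    have "c \<in> {1..<tree_size t}" "tree_parent t c = v"
      using that children_tree[OF T] less.prems by auto
    then show "c < v" "c \<in> {1..tree_size t}" using is_treeD(4)[OF T] by auto
  qed
  have "mset_set (children t' (\<sigma> v)) = image_mset \<sigma> (mset_set (children t v))"
    unfolding tree_iso_children[OF T T' I less.prems]
    by (rule image_mset_mset_set[symmetric]) (rule inj_on_subset[OF permutes_inj[OF P]], simp)
  moreover have "image_mset (shape_at t' \<circ> \<sigma>) (mset_set (children t v)) =
      image_mset (shape_at t) (mset_set (children t v))"
    using C less.IH by (intro image_mset_cong) auto
  moreover have "\<sigma> v \<in> tree_leaves t' \<longleftrightarrow> v \<in> tree_leaves t"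
    unfolding tree_isoD(3)[OF I, symmetric] using permutes_inj[OF P] by (simp add: inj_image_mem_iff)
  ultimately show ?case by (subst (1 2) shape_at.simps) (simp add: multiset.map_comp)
qed

lemma tree_equiv_permute_succ_trees:
  assumes T: "is_tree (n, s, L)" and nL: "n \<notin> L"
    and p: "p permutes {..<length (succ_trees (n, s, L))}"
  obtains s'' L'' where "tree_equiv (n, s, L) (n, s'', L'')" "is_tree (n, s'', L'')" "n \<notin> L''"
    "succ_trees (n, s'', L'') = permute_list p (succ_trees (n, s, L))"
proof -
  define ts where "ts = succ_trees (n, s, L)"
  define us where "us = permute_list p ts"
  have p': "p permutes {..<length ts}" using p by (simp add: ts_def)
  have trees: "\<forall>u\<in>set us. is_tree u"
    using succ_trees_is_tree[OF T] set_permute_list[OF p'] by (simp add: us_def ts_def)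
  obtain n'' s'' L'' where j: "join us = (n'', s'', L'')" by (cases "join us")
  have J: "is_join (n'', s'', L'') us" using is_join_join[OF trees] j by simp
  have "mset (map tree_size us) = mset (map tree_size ts)"
    using mset_permute_list[OF p'] by (simp add: us_def)
  then have "sum_list (map tree_size us) = sum_list (map tree_size ts)" by (metis sum_mset_sum_list)
  then have "n'' = n"
    using is_joinD(1)[OF J] is_joinD(1)[OF is_join_succ_trees[OF T nL, folded ts_def]]
    by (simp add: offset_length)
  note J = J[unfolded this]
  have T'': "is_tree (n, s'', L'')" using is_tree_if_is_join[OF J trees] .
  have nL'': "n \<notin> L''" using is_joinD(1,2)[OF J] by auto
  have succ: "succ_trees (n, s'', L'') = us" using succ_trees_eq_if_is_join[OF J trees] .
  have "tree_equiv (n, s, L) (n, s'', L'')"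
    by (rule tree_equiv.perm[OF T T'' nL nL'' p]) (simp add: succ us_def ts_def permute_list_def)
  then show ?thesis using that T'' nL'' succ by (simp add: us_def ts_def)
qed

lemma tree_equiv_match_shapes:
  assumes T: "is_tree (n, s, L)" and nL: "n \<notin> L"
    and shapes: "mset (map tree_shape (succ_trees (n, s, L))) = mset xs"
  obtains s'' L'' where "tree_equiv (n, s, L) (n, s'', L'')" "is_tree (n, s'', L'')" "n \<notin> L''"
    "map tree_shape (succ_trees (n, s'', L'')) = xs"
proof -
  obtain p where p: "p permutes {..<length (succ_trees (n, s, L))}"
    and xs: "permute_list p (map tree_shape (succ_trees (n, s, L))) = xs"
    using mset_eq_permutation[OF shapes[symmetric]] by auto
  obtain s'' L'' where "tree_equiv (n, s, L) (n, s'', L'')" "is_tree (n, s'', L'')" "n \<notin> L''"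
    and "succ_trees (n, s'', L'') = permute_list p (succ_trees (n, s, L))"
    by (rule tree_equiv_permute_succ_trees[OF T nL p])
  moreover have "map tree_shape (permute_list p (succ_trees (n, s, L))) = xs"
    using xs permute_list_map[OF p, of tree_shape] by simp
  ultimately show ?thesis using that by simp
qed

lemma tree_equiv_if_tree_shape_eq:
  "is_tree t \<Longrightarrow> is_tree t' \<Longrightarrow> tree_size t' = tree_size t \<Longrightarrow> tree_shape t = tree_shape t' \<Longrightarrow>
    tree_equiv t t'"
proof (induction "tree_size t" arbitrary: t t' rule: less_induct)
  case less
  obtain n s L where t: "t = (n, s, L)" by (cases t)
  obtain s' L' where t': "t' = (n, s', L')" using less.prems(3) t by (cases t') auto
  have T: "is_tree (n, s, L)" and T': "is_tree (n, s', L')" using less.prems t t' by auto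
  have leaf_iff: "n \<in> L \<longleftrightarrow> n \<in> L'"
    using arg_cong[OF less.prems(4), of leaf_mark] t t' by (simp add: leaf_mark_shape_at)
  show ?case
  proof (cases "n \<in> L")
    case True
    then have "t = t'" using leaf_tree_eq[OF T True] leaf_tree_eq[OF T'] leaf_iff t t' by simp
    then show ?thesis using tree_equiv.refl[OF less.prems(1)] by simp
  next
    case False
    then have nL': "n \<notin> L'" using leaf_iff by simp
    define ts' where "ts' = succ_trees (n, s', L')"
    have "mset (map tree_shape (succ_trees (n, s, L))) = mset (map tree_shape ts')"
      using less.prems(4) t t' tree_shape_join[OF is_join_succ_trees[OF T False] succ_trees_is_tree[OF T]]
        tree_shape_join[OF is_join_succ_trees[OF T' nL'] succ_trees_is_tree[OF T']]
      by (simp add: ts'_def)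
    then obtain s'' L'' where E: "tree_equiv (n, s, L) (n, s'', L'')" and T'': "is_tree (n, s'', L'')"
      and nL'': "n \<notin> L''" and shapes: "map tree_shape (succ_trees (n, s'', L'')) = map tree_shape ts'"
      by (rule tree_equiv_match_shapes[OF T False])
    define us where "us = succ_trees (n, s'', L'')"
    have trees: "\<forall>u\<in>set us. is_tree u" "\<forall>u\<in>set ts'. is_tree u"
      using succ_trees_is_tree[OF T''] succ_trees_is_tree[OF T'] by (simp_all add: us_def ts'_def)
    have lengths: "length ts' = length us" using shapes by (metis length_map us_def)
    have "tree_equiv (us ! i) (ts' ! i) \<and> tree_size (us ! i) = tree_size (ts' ! i)"
      if i: "i < length us" for i
    proof -
      have ui: "us ! i \<in> set us" and ti: "ts' ! i \<in> set ts'" using i lengths by simp_all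
      have sh: "tree_shape (us ! i) = tree_shape (ts' ! i)"
        using arg_cong[OF shapes, of "\<lambda>xs. xs ! i"] i lengths by (simp add: us_def)
      have size: "tree_size (ts' ! i) = tree_size (us ! i)"
        using node_count_tree_shape[of "us ! i"] node_count_tree_shape[of "ts' ! i"] trees ui ti sh
        by simp
      have "tree_size (us ! i) < tree_size t"
        using size_lt_is_join[OF is_join_succ_trees[OF T'' nL''] ui[unfolded us_def]] t
        by (simp add: us_def)
      then show ?thesis using less.hyps trees ui ti size sh by auto
    qed
    then have "tree_equiv (n, s'', L'') (n, s', L')"
      using lengths by (intro tree_equiv.cong[OF T'' T' nL'' nL'])
        (simp add: ts'_def[symmetric] us_def[symmetric] list_all2_conv_all_nth)
    then show ?thesis using tree_equiv.trans[OF E] t t' by simp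
  qed
qed

theorem lemma4:
  assumes "is_tree (n, s, L)" and "is_tree (n, s', L')"
  shows "tree_equiv (n, s, L) (n, s', L') \<longleftrightarrow>
         (\<exists>\<sigma>. \<sigma> permutes {1..n} \<and> \<sigma> ` L = L' \<and>
              (\<forall>i\<in>{1..<n}. s' (\<sigma> i) = \<sigma> (s i)))"
proof
  assume "tree_equiv (n, s, L) (n, s', L')"
  then obtain \<sigma> where "tree_iso \<sigma> (n, s, L) (n, s', L')" using tree_equiv_imp_iso by blast
  then show "\<exists>\<sigma>. \<sigma> permutes {1..n} \<and> \<sigma> ` L = L' \<and> (\<forall>i\<in>{1..<n}. s' (\<sigma> i) = \<sigma> (s i))"
    by (auto simp: tree_iso_def)
next
  assume "\<exists>\<sigma>. \<sigma> permutes {1..n} \<and> \<sigma> ` L = L' \<and> (\<forall>i\<in>{1..<n}. s' (\<sigma> i) = \<sigma> (s i))"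
  then obtain \<sigma> where I: "tree_iso \<sigma> (n, s, L) (n, s', L')" by (auto simp: tree_iso_def)
  have "tree_shape (n, s, L) = tree_shape (n, s', L')"
    using shape_at_iso[OF assms I, of n] tree_iso_root[OF assms I] is_treeD(1)[OF assms(1)] by simp
  then show "tree_equiv (n, s, L) (n, s', L')" using tree_equiv_if_tree_shape_eq[OF assms] by simp
qed

end
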